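(* Let $M>2$ be an integer, $\tau>0$, $p_{\max}>0$, and $\beta_1>\beta_2>0$. Define $$R^{\mathrm{mMIMO}}_{\max}=\tau\log_2\!\left(\frac{\left(\beta_1+\beta_2+p_{\max}\beta_1\beta_2(M-2)\right)^2}{4\beta_1\beta_2}\right)\ \text{ if } p_{\max}\ge\frac{\beta_1-\beta_2}{\beta_1\beta_2(M-2)},\qquad R^{\mathrm{mMIMO}}_{\max}=\tau\log_2\!\left(1+p_{\max}\beta_1(M-2)\right)\ \text{ otherwise},$$ and $R^{\mathrm{NOMA}}_{\max}=\tau\log_2\left(1+p_{\max}\beta_1M\right)$. Let $$M^*=2+\frac{\beta_1-\beta_2}{p_{\max}\beta_1\beta_2}+\frac{2\sqrt2}{\sqrt{p_{\max}\beta_2}}.$$ Then $R^{\mathrm{mMIMO}}_{\max}\ge R^{\mathrm{NOMA}}_{\max}$ for all $M\ge M^*$.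
   Context: $R^{\mathrm{mMIMO}}_{\max}$ is the maximum two-user sum rate $\max\{\tau\log_2(1+(M-2)p_1\beta_1)+\tau\log_2(1+(M-2)p_2\beta_2): p_1,p_2\ge0,\ p_1+p_2\le p_{\max}\}$ of zero-forcing massive MIMO with perfect CSI, and $R^{\mathrm{NOMA}}_{\max}$ is the maximum two-user sum rate of the considered NOMA scheme (all power to the cell-center user). $\beta_1,\beta_2$ are the large-scale fading coefficients of the cell-center and cell-edge users, $M$ the number of base-station antennas, $p_{\max}$ the total normalized power, $\tau$ the fraction of the coherence interval used for data. *)

theory Defs
  imports Complex_Main
begin

definition R_mMIMO_max :: "real \<Rightarrow> real \<Rightarrow> real \<Rightarrow> real \<Rightarrow> nat \<Rightarrow> real" where
  "R_mMIMO_max \<tau> pmax \<beta>1 \<beta>2 M =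
     (if pmax \<ge> (\<beta>1 - \<beta>2) / (\<beta>1 * \<beta>2 * (real M - 2))
      then \<tau> * log 2 ((\<beta>1 + \<beta>2 + pmax * \<beta>1 * \<beta>2 * (real M - 2))^2 / (4 * \<beta>1 * \<beta>2))
      else \<tau> * log 2 (1 + pmax * \<beta>1 * (real M - 2)))"

definition R_NOMA_max :: "real \<Rightarrow> real \<Rightarrow> real \<Rightarrow> nat \<Rightarrow> real" where
  "R_NOMA_max \<tau> pmax \<beta>1 M = \<tau> * log 2 (1 + pmax * \<beta>1 * real M)"

definition M_star :: "real \<Rightarrow> real \<Rightarrow> real \<Rightarrow> real" where
  "M_star pmax \<beta>1 \<beta>2 = 2 + (\<beta>1 - \<beta>2) / (pmax * \<beta>1 * \<beta>2) + 2 * sqrt 2 / sqrt (pmax * \<beta>2)"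

end

theory Submission
  imports Defs
begin

(* Write m = M - 2 and k = pmax \<beta>1 \<beta>2. The two SINR arguments of the logarithms differ by
     (\<beta>1 + \<beta>2 + k m)^2 - 4 \<beta>1 \<beta>2 (1 + pmax \<beta>1 M) = (k m - (\<beta>1 - \<beta>2))^2 - 8 pmax \<beta>1^2 \<beta>2,
   and multiplying M - M_star by k shows that M \<ge> M_star says exactly
     k m - (\<beta>1 - \<beta>2) \<ge> 2 \<beta>1 sqrt (2 pmax \<beta>2) \<ge> 0.
   Nonnegativity puts pmax above the threshold of the first case of R_mMIMO_max, and squaring
   makes the difference above nonnegative; monotonicity of log finishes the proof. *)

lemma sum_rate_argument_gap:
  fixes p \<beta>1 \<beta>2 m :: "'a :: comm_ring_1"
  shows "(\<beta>1 + \<beta>2 + p * \<beta>1 * \<beta>2 * m)^2 - 4 * \<beta>1 * \<beta>2 * (1 + p * \<beta>1 * (m + 2))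
       = (p * \<beta>1 * \<beta>2 * m - (\<beta>1 - \<beta>2))^2 - 8 * p * \<beta>1^2 * \<beta>2"
  by (simp add: power2_eq_square algebra_simps)

lemma M_star_le_iff:
  fixes p \<beta>1 \<beta>2 x :: real
  assumes "p > 0" and "\<beta>1 > 0" and "\<beta>2 > 0"
  shows "M_star p \<beta>1 \<beta>2 \<le> x
     \<longleftrightarrow> 2 * \<beta>1 * sqrt (2 * p * \<beta>2) \<le> p * \<beta>1 * \<beta>2 * (x - 2) - (\<beta>1 - \<beta>2)"
proof -
  define k where "k = p * \<beta>1 * \<beta>2"
  have k_pos: "k > 0"
    using assms by (simp add: k_def)
  have "k * (2 * sqrt 2 / sqrt (p * \<beta>2)) = 2 * \<beta>1 * sqrt (2 * p * \<beta>2)"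
  proof -
    have "sqrt (p * \<beta>2) * sqrt (p * \<beta>2) = p * \<beta>2"
      using assms by simp
    then show ?thesis
      using assms by (simp add: k_def real_sqrt_mult field_simps)
  qed
  moreover have "k * ((\<beta>1 - \<beta>2) / k) = \<beta>1 - \<beta>2"
    using k_pos by simp
  ultimately have gap: "k * (x - M_star p \<beta>1 \<beta>2)
      = k * (x - 2) - (\<beta>1 - \<beta>2) - 2 * \<beta>1 * sqrt (2 * p * \<beta>2)"
    unfolding M_star_def k_def[symmetric] by (simp add: algebra_simps)
  have "M_star p \<beta>1 \<beta>2 \<le> x \<longleftrightarrow> 0 \<le> k * (x - M_star p \<beta>1 \<beta>2)"
    using k_pos by (simp add: zero_le_mult_iff)
  also have "\<dots> \<longleftrightarrow> 2 * \<beta>1 * sqrt (2 * p * \<beta>2) \<le> k * (x - 2) - (\<beta>1 - \<beta>2)"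
    unfolding gap by linarith
  finally show ?thesis
    unfolding k_def .
qed

lemma NOMA_argument_le_mMIMO_argument:
  fixes p \<beta>1 \<beta>2 m :: real
  assumes "\<beta>1 > 0" and "\<beta>2 > 0"
    and "8 * p * \<beta>1^2 * \<beta>2 \<le> (p * \<beta>1 * \<beta>2 * m - (\<beta>1 - \<beta>2))^2"
  shows "1 + p * \<beta>1 * (m + 2) \<le> (\<beta>1 + \<beta>2 + p * \<beta>1 * \<beta>2 * m)^2 / (4 * \<beta>1 * \<beta>2)"
proof -
  have "4 * \<beta>1 * \<beta>2 * (1 + p * \<beta>1 * (m + 2)) \<le> (\<beta>1 + \<beta>2 + p * \<beta>1 * \<beta>2 * m)^2"
    using assms(3) sum_rate_argument_gap[of \<beta>1 \<beta>2 p m] by linarith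
  then show ?thesis
    using assms(1,2) by (simp add: le_divide_eq mult.commute)
qed

lemma M_star_le_imp_margin:
  fixes p \<beta>1 \<beta>2 m :: real
  assumes "p > 0" and "\<beta>1 > 0" and "\<beta>2 > 0" and "M_star p \<beta>1 \<beta>2 \<le> m + 2"
  shows "\<beta>1 - \<beta>2 \<le> p * \<beta>1 * \<beta>2 * m"
    and "8 * p * \<beta>1^2 * \<beta>2 \<le> (p * \<beta>1 * \<beta>2 * m - (\<beta>1 - \<beta>2))^2"
proof -
  have margin: "2 * \<beta>1 * sqrt (2 * p * \<beta>2) \<le> p * \<beta>1 * \<beta>2 * m - (\<beta>1 - \<beta>2)"
    using M_star_le_iff[OF assms(1-3)] assms(4) by simp
  have margin_nonneg: "0 \<le> 2 * \<beta>1 * sqrt (2 * p * \<beta>2)"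
    using assms(1-3) by simp
  from margin margin_nonneg show "\<beta>1 - \<beta>2 \<le> p * \<beta>1 * \<beta>2 * m"
    by linarith
  have "(2 * \<beta>1 * sqrt (2 * p * \<beta>2))^2 = 8 * p * \<beta>1^2 * \<beta>2"
    using assms(1,3) by (simp add: power_mult_distrib)
  moreover have "(2 * \<beta>1 * sqrt (2 * p * \<beta>2))^2 \<le> (p * \<beta>1 * \<beta>2 * m - (\<beta>1 - \<beta>2))^2"
    using margin margin_nonneg by (rule power_mono)
  ultimately show "8 * p * \<beta>1^2 * \<beta>2 \<le> (p * \<beta>1 * \<beta>2 * m - (\<beta>1 - \<beta>2))^2"
    by simp
qed

theorem mainTheorem3:
  fixes M :: nat and \<tau> pmax \<beta>1 \<beta>2 :: real
  assumes "M > 2" and "\<tau> > 0" and "pmax > 0" and "\<beta>1 > \<beta>2" and "\<beta>2 > 0"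
    and "real M \<ge> M_star pmax \<beta>1 \<beta>2"
  shows "R_mMIMO_max \<tau> pmax \<beta>1 \<beta>2 M \<ge> R_NOMA_max \<tau> pmax \<beta>1 M"
proof -
  define m where "m = real M - 2"
  have m_pos: "m > 0" and M_eq: "real M = m + 2"
    using assms(1) by (simp_all add: m_def)
  have \<beta>1_pos: "\<beta>1 > 0"
    using assms(4,5) by simp
  have "M_star pmax \<beta>1 \<beta>2 \<le> m + 2"
    using assms(6) M_eq by simp
  note margin = M_star_le_imp_margin[OF assms(3) \<beta>1_pos assms(5) this]
  have threshold: "pmax \<ge> (\<beta>1 - \<beta>2) / (\<beta>1 * \<beta>2 * (real M - 2))"
    using margin(1) \<beta>1_pos assms(5) m_pos
    by (simp add: M_eq pos_divide_le_eq mult.commute mult.left_commute)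
  have "1 + pmax * \<beta>1 * real M
      \<le> (\<beta>1 + \<beta>2 + pmax * \<beta>1 * \<beta>2 * m)^2 / (4 * \<beta>1 * \<beta>2)"
    unfolding M_eq by (rule NOMA_argument_le_mMIMO_argument[OF \<beta>1_pos assms(5) margin(2)])
  moreover have "0 < 1 + pmax * \<beta>1 * real M"
    using assms(3) \<beta>1_pos by (intro add_pos_nonneg mult_nonneg_nonneg) auto
  ultimately have "log 2 (1 + pmax * \<beta>1 * real M)
      \<le> log 2 ((\<beta>1 + \<beta>2 + pmax * \<beta>1 * \<beta>2 * m)^2 / (4 * \<beta>1 * \<beta>2))"
    by (subst log_le_cancel_iff) auto
  then show ?thesis
    using threshold assms(2) unfolding R_mMIMO_max_def R_NOMA_max_def m_def by simp
qed

end
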